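(* $(\overline{\mathcal{D}},\overline{\delta},\overline{\varepsilon})$ is a comonad on $\mathsf{CART}$.
   Context: Composition in diagrammatic order. $\mathsf{CART}$ is the category of categories with finite products and functors preserving finite products strictly ($\mathsf{F}(A\times B)=\mathsf{F}A\times\mathsf{F}B$, terminal object preserved, $\mathsf{F}(\pi_j)=\pi_j$). For $\mathbb{X}$ in $\mathsf{CART}$ let $\mathsf{P}(A)=A\times A$, $\mathsf{P}(f)=f\times f$. A pre-$\mathsf{D}$-sequence $f_\bullet:A\to B$ is $(f_0,f_1,\dots)$ with $f_n:\mathsf{P}^n(A)\to B$. Tangent $\mathsf{T}(f_\bullet):\mathsf{P}(A)\to\mathsf{P}(B)$, $\mathsf{T}(f_\bullet)_n=\langle\mathsf{P}^n(\pi_0)f_n,f_{n+1}\rangle$; differential $\mathsf{D}[f_\bullet]:\mathsf{P}(A)\to B$, $\mathsf{D}[f_\bullet]_n=f_{n+1}$. $\overline{\mathcal{D}}[\mathbb{X}]$ has objects those of $\mathbb{X}$, pre-$\mathsf{D}$-sequences as maps, identity $i_\bullet$ with $i_0=1$, $i_n=\pi_1\cdots\pi_1$ ($n$ times), composition $(f_\bullet\ast g_\bullet)_n=\mathsf{T}^n(f_\bullet)_0g_n$, and finite products: terminal object of $\mathbb{X}$, projections $i_\bullet\cdot\pi_j$ with $(i_\bullet\cdot\pi_j)_n=i_n\pi_j$, pairing $\langle f_\bullet,g_\bullet\rangle_n=\langle f_n,g_n\rangle$. For $\mathsf{F}$ in $\mathsf{CART}$, $\overline{\mathcal{D}}[\mathsf{F}]$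 is $\mathsf{F}$ on objects and $\overline{\mathcal{D}}[\mathsf{F}](f_\bullet)_n=\mathsf{F}(f_n)$. $\overline{\varepsilon}:\overline{\mathcal{D}}[\mathbb{X}]\to\mathbb{X}$ is the identity on objects and $f_\bullet\mapsto f_0$. $\overline{\delta}:\overline{\mathcal{D}}[\mathbb{X}]\to\overline{\mathcal{D}}[\overline{\mathcal{D}}[\mathbb{X}]]$ is the identity on objects and sends $f_\bullet$ to the pre-$\mathsf{D}$-sequence (of $\overline{\mathcal{D}}[\mathbb{X}]$) with $0$-th term $f_\bullet$ and $n$-th term $\mathsf{D}^n[f_\bullet]$. *)

theory Defs
  imports Main
begin

text \<open>A category with chosen finite products. Composition is diagrammatic:
  Cmp C f g is "f then g", defined when Cod f = Dom g.\<close>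

record ('o, 'a) cart =
  Obj :: "'o set"
  Arr :: "'a set"
  Dom :: "'a \<Rightarrow> 'o"
  Cod :: "'a \<Rightarrow> 'o"
  Idt :: "'o \<Rightarrow> 'a"
  Cmp :: "'a \<Rightarrow> 'a \<Rightarrow> 'a"
  Prd :: "'o \<Rightarrow> 'o \<Rightarrow> 'o"
  Trm :: "'o"
  Pr0 :: "'o \<Rightarrow> 'o \<Rightarrow> 'a"
  Pr1 :: "'o \<Rightarrow> 'o \<Rightarrow> 'a"

definition hom :: "('o, 'a) cart \<Rightarrow> 'o \<Rightarrow> 'o \<Rightarrow> 'a set" where
  "hom C A B = {f \<in> Arr C. Dom C f = A \<and> Cod C f = B}"

definition category :: "('o, 'a) cart \<Rightarrow> bool" where
  "category C \<longleftrightarrow>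
     (\<forall>A\<in>Obj C. Idt C A \<in> hom C A A) \<and>
     (\<forall>f\<in>Arr C. Dom C f \<in> Obj C \<and> Cod C f \<in> Obj C) \<and>
     (\<forall>f\<in>Arr C. \<forall>g\<in>Arr C. Cod C f = Dom C g \<longrightarrow>
         Cmp C f g \<in> hom C (Dom C f) (Cod C g)) \<and>
     (\<forall>f\<in>Arr C. Cmp C (Idt C (Dom C f)) f = f \<and> Cmp C f (Idt C (Cod C f)) = f) \<and>
     (\<forall>f\<in>Arr C. \<forall>g\<in>Arr C. \<forall>h\<in>Arr C. Cod C f = Dom C g \<longrightarrow> Cod C g = Dom C h \<longrightarrow>
         Cmp C (Cmp C f g) h = Cmp C f (Cmp C g h))"

text \<open>An object of CART: a category whose chosen terminal object and chosen
  binary products (with chosen projections) satisfy the universal properties.\<close>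

definition cartesian :: "('o, 'a) cart \<Rightarrow> bool" where
  "cartesian C \<longleftrightarrow> category C \<and>
     Trm C \<in> Obj C \<and> (\<forall>A\<in>Obj C. \<exists>!h. h \<in> hom C A (Trm C)) \<and>
     (\<forall>A\<in>Obj C. \<forall>B\<in>Obj C.
        Prd C A B \<in> Obj C \<and>
        Pr0 C A B \<in> hom C (Prd C A B) A \<and>
        Pr1 C A B \<in> hom C (Prd C A B) B \<and>
        (\<forall>Z. \<forall>f\<in>hom C Z A. \<forall>g\<in>hom C Z B.
           \<exists>!h. h \<in> hom C Z (Prd C A B) \<and> Cmp C h (Pr0 C A B) = f \<and> Cmp C h (Pr1 C A B) = g))"

definition pair :: "('o, 'a) cart \<Rightarrow> 'a \<Rightarrow> 'a \<Rightarrow> 'a" where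
  "pair C f g = (THE h. h \<in> hom C (Dom C f) (Prd C (Cod C f) (Cod C g)) \<and>
      Cmp C h (Pr0 C (Cod C f) (Cod C g)) = f \<and> Cmp C h (Pr1 C (Cod C f) (Cod C g)) = g)"

definition PO :: "('o, 'a) cart \<Rightarrow> 'o \<Rightarrow> 'o" where
  "PO C A = Prd C A A"

definition PA :: "('o, 'a) cart \<Rightarrow> 'a \<Rightarrow> 'a" where
  "PA C f = pair C (Cmp C (Pr0 C (Dom C f) (Dom C f)) f) (Cmp C (Pr1 C (Dom C f) (Dom C f)) f)"

fun idseq :: "('o, 'a) cart \<Rightarrow> 'o \<Rightarrow> nat \<Rightarrow> 'a" where
  "idseq C A 0 = Idt C A"
| "idseq C A (Suc n) = Cmp C (Pr1 C ((PO C ^^ n) A) ((PO C ^^ n) A)) (idseq C A n)"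

definition Tseq :: "('o, 'a) cart \<Rightarrow> (nat \<Rightarrow> 'a) \<Rightarrow> (nat \<Rightarrow> 'a)" where
  "Tseq C f = (\<lambda>n. pair C (Cmp C ((PA C ^^ n) (Pr0 C (Dom C (f 0)) (Dom C (f 0)))) (f n))
                         (f (Suc n)))"

definition Dseq :: "(nat \<Rightarrow> 'a) \<Rightarrow> (nat \<Rightarrow> 'a)" where
  "Dseq f = (\<lambda>n. f (Suc n))"

definition compD :: "('o, 'a) cart \<Rightarrow> (nat \<Rightarrow> 'a) \<Rightarrow> (nat \<Rightarrow> 'a) \<Rightarrow> (nat \<Rightarrow> 'a)" where
  "compD C f g = (\<lambda>n. Cmp C ((Tseq C ^^ n) f 0) (g n))"

definition Dbar :: "('o, 'a) cart \<Rightarrow> ('o, nat \<Rightarrow> 'a) cart" where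
  "Dbar C = \<lparr> Obj = Obj C,
     Arr = {f. \<forall>n. f n \<in> hom C ((PO C ^^ n) (Dom C (f 0))) (Cod C (f 0))},
     Dom = (\<lambda>f. Dom C (f 0)),
     Cod = (\<lambda>f. Cod C (f 0)),
     Idt = idseq C,
     Cmp = compD C,
     Prd = Prd C,
     Trm = Trm C,
     Pr0 = (\<lambda>A B n. Cmp C (idseq C (Prd C A B) n) (Pr0 C A B)),
     Pr1 = (\<lambda>A B n. Cmp C (idseq C (Prd C A B) n) (Pr1 C A B)) \<rparr>"

type_synonym ('o, 'a, 'p, 'b) cfun = "('o \<Rightarrow> 'p) \<times> ('a \<Rightarrow> 'b)"

definition is_functor :: "('o, 'a) cart \<Rightarrow> ('p, 'b) cart \<Rightarrow> ('o, 'a, 'p, 'b) cfun \<Rightarrow> bool" where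
  "is_functor C D F \<longleftrightarrow>
     (\<forall>A\<in>Obj C. fst F A \<in> Obj D) \<and>
     (\<forall>f\<in>Arr C. snd F f \<in> hom D (fst F (Dom C f)) (fst F (Cod C f))) \<and>
     (\<forall>A\<in>Obj C. snd F (Idt C A) = Idt D (fst F A)) \<and>
     (\<forall>f\<in>Arr C. \<forall>g\<in>Arr C. Cod C f = Dom C g \<longrightarrow> snd F (Cmp C f g) = Cmp D (snd F f) (snd F g))"

text \<open>Morphisms of CART: functors strictly preserving the chosen finite products.\<close>

definition cart_functor :: "('o, 'a) cart \<Rightarrow> ('p, 'b) cart \<Rightarrow> ('o, 'a, 'p, 'b) cfun \<Rightarrow> bool" where
  "cart_functor C D F \<longleftrightarrow> cartesian C \<and> cartesian D \<and> is_functor C D F \<and>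
     fst F (Trm C) = Trm D \<and>
     (\<forall>A\<in>Obj C. \<forall>B\<in>Obj C.
        fst F (Prd C A B) = Prd D (fst F A) (fst F B) \<and>
        snd F (Pr0 C A B) = Pr0 D (fst F A) (fst F B) \<and>
        snd F (Pr1 C A B) = Pr1 D (fst F A) (fst F B))"

definition feq :: "('o, 'a) cart \<Rightarrow> ('o, 'a, 'p, 'b) cfun \<Rightarrow> ('o, 'a, 'p, 'b) cfun \<Rightarrow> bool" where
  "feq C F G \<longleftrightarrow> (\<forall>A\<in>Obj C. fst F A = fst G A) \<and> (\<forall>f\<in>Arr C. snd F f = snd G f)"

definition fcmp :: "('o, 'a, 'p, 'b) cfun \<Rightarrow> ('p, 'b, 'q, 'c) cfun \<Rightarrow> ('o, 'a, 'q, 'c) cfun" where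
  "fcmp F G = (fst G \<circ> fst F, snd G \<circ> snd F)"

definition fid :: "('o, 'a, 'o, 'a) cfun" where
  "fid = (id, id)"

definition Dbar_map :: "('o, 'a, 'p, 'b) cfun \<Rightarrow> ('o, nat \<Rightarrow> 'a, 'p, nat \<Rightarrow> 'b) cfun" where
  "Dbar_map F = (fst F, \<lambda>f n. snd F (f n))"

definition counit :: "('o, nat \<Rightarrow> 'a, 'o, 'a) cfun" where
  "counit = (id, \<lambda>f. f 0)"

definition comult :: "('o, nat \<Rightarrow> 'a, 'o, nat \<Rightarrow> nat \<Rightarrow> 'a) cfun" where
  "comult = (id, \<lambda>f n. (Dseq ^^ n) f)"

end

theory Submission
  imports Defs
begin

text \<open>Composition in D-bar[X] is (f * g)_n = T^n(f)_0 g_n, so the category axioms come down to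
  the tangent T preserving identities and composition. Both are checked on the two components of
  P(B) = B x B; for composition the first component needs the naturality
  T^k(T f)_m P^k(pi_0) = P^m(P^k(pi_0)) T^k(f)_m, which follows by induction on k because T
  commutes with pre- and post-composition by maps of X. Composing with a projection
  i_n pi_j of D-bar[X] merely post-composes every term with pi_j, so products in D-bar[X] are
  computed termwise. The comultiplication preserves composition because the tangent of
  D-bar[X] sends (D^n[f])_n to (D^n[T f])_n. The remaining functoriality, naturality and
  comonad identities are index shifts, D^n[D^m[f]] = D^(n+m)[f].\<close>

definition pre_dseq :: "('o, 'a) cart \<Rightarrow> 'o \<Rightarrow> 'o \<Rightarrow> (nat \<Rightarrow> 'a) \<Rightarrow> bool" where
  "pre_dseq C A B f \<longleftrightarrow> (\<forall>n. f n \<in> hom C ((PO C ^^ n) A) B)"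

definition lin_seq :: "('o, 'a) cart \<Rightarrow> 'o \<Rightarrow> 'a \<Rightarrow> (nat \<Rightarrow> 'a)" where
  "lin_seq C A x = (\<lambda>n. Cmp C (idseq C A n) x)"

lemma hom_Dbar: "hom (Dbar C) A B = {f. pre_dseq C A B f}"
  unfolding hom_def Dbar_def pre_dseq_def by auto

lemma Dbar_simps [simp]:
  "Obj (Dbar C) = Obj C" "Dom (Dbar C) f = Dom C (f 0)" "Cod (Dbar C) f = Cod C (f 0)"
  "Idt (Dbar C) = idseq C" "Cmp (Dbar C) = compD C" "Prd (Dbar C) = Prd C" "Trm (Dbar C) = Trm C"
  "Pr0 (Dbar C) A B = lin_seq C (Prd C A B) (Pr0 C A B)"
  "Pr1 (Dbar C) A B = lin_seq C (Prd C A B) (Pr1 C A B)"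
  "Arr (Dbar C) = {f. pre_dseq C (Dom C (f 0)) (Cod C (f 0)) f}"
  by (auto simp: Dbar_def lin_seq_def pre_dseq_def)

lemma PO_Dbar [simp]: "PO (Dbar C) = PO C"
  by (auto simp: PO_def fun_eq_iff)

lemma compD_apply: "compD C f g n = Cmp C ((Tseq C ^^ n) f 0) (g n)"
  by (simp add: compD_def)

lemma Dseq_power: "(Dseq ^^ n) f = (\<lambda>k. f (k + n))"
  by (induction n) (auto simp: Dseq_def)

lemma cart_functorI:
  assumes "cartesian C" and "cartesian D"
    and "\<And>A. A \<in> Obj C \<Longrightarrow> fst F A \<in> Obj D"
    and "\<And>f A B. f \<in> hom C A B \<Longrightarrow> snd F f \<in> hom D (fst F A) (fst F B)"
    and "\<And>A. A \<in> Obj C \<Longrightarrow> snd F (Idt C A) = Idt D (fst F A)"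
    and "\<And>f g A B E. f \<in> hom C A B \<Longrightarrow> g \<in> hom C B E \<Longrightarrow>
           snd F (Cmp C f g) = Cmp D (snd F f) (snd F g)"
    and "fst F (Trm C) = Trm D"
    and "\<And>A B. A \<in> Obj C \<Longrightarrow> B \<in> Obj C \<Longrightarrow> fst F (Prd C A B) = Prd D (fst F A) (fst F B)"
    and "\<And>A B. A \<in> Obj C \<Longrightarrow> B \<in> Obj C \<Longrightarrow> snd F (Pr0 C A B) = Pr0 D (fst F A) (fst F B)"
    and "\<And>A B. A \<in> Obj C \<Longrightarrow> B \<in> Obj C \<Longrightarrow> snd F (Pr1 C A B) = Pr1 D (fst F A) (fst F B)"
  shows "cart_functor C D F"
  using assms unfolding cart_functor_def is_functor_def hom_def by auto

section \<open>Cartesian categories\<close>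

locale cartesian_category =
  fixes C :: "('o, 'a) cart"
  assumes cartesian: "cartesian C"
begin

abbreviation cmp (infixl "\<cdot>" 70) where "f \<cdot> g \<equiv> Cmp C f g"
abbreviation po where "po n A \<equiv> (PO C ^^ n) A"
abbreviation pa where "pa n f \<equiv> (PA C ^^ n) f"

lemma category: "category C"
  using cartesian by (simp add: cartesian_def)

lemma hom_objs: "f \<in> hom C A B \<Longrightarrow> A \<in> Obj C \<and> B \<in> Obj C"
  using category unfolding category_def hom_def by auto

lemma comp_hom: "f \<in> hom C A B \<Longrightarrow> g \<in> hom C B D \<Longrightarrow> f \<cdot> g \<in> hom C A D"
  using category unfolding category_def hom_def by auto

lemma id_hom: "A \<in> Obj C \<Longrightarrow> Idt C A \<in> hom C A A"
  using category unfolding category_def by auto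

lemma id_left: "f \<in> hom C A B \<Longrightarrow> Idt C A \<cdot> f = f"
  using category unfolding category_def hom_def by auto

lemma id_right: "f \<in> hom C A B \<Longrightarrow> f \<cdot> Idt C B = f"
  using category unfolding category_def hom_def by auto

lemma comp_assoc:
  "f \<in> hom C A B \<Longrightarrow> g \<in> hom C B D \<Longrightarrow> h \<in> hom C D E \<Longrightarrow> (f \<cdot> g) \<cdot> h = f \<cdot> (g \<cdot> h)"
  using category unfolding category_def hom_def by auto

lemma terminal_obj: "Trm C \<in> Obj C"
  using cartesian by (simp add: cartesian_def)

lemma terminal_unique: "A \<in> Obj C \<Longrightarrow> \<exists>!h. h \<in> hom C A (Trm C)"
  using cartesian by (simp add: cartesian_def)

lemma prd_obj: "A \<in> Obj C \<Longrightarrow> B \<in> Obj C \<Longrightarrow> Prd C A B \<in> Obj C"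
  using cartesian by (simp add: cartesian_def)

lemma pr0_hom: "A \<in> Obj C \<Longrightarrow> B \<in> Obj C \<Longrightarrow> Pr0 C A B \<in> hom C (Prd C A B) A"
  using cartesian by (simp add: cartesian_def)

lemma pr1_hom: "A \<in> Obj C \<Longrightarrow> B \<in> Obj C \<Longrightarrow> Pr1 C A B \<in> hom C (Prd C A B) B"
  using cartesian by (simp add: cartesian_def)

lemma product_universal:
  assumes "f \<in> hom C Z A" and "g \<in> hom C Z B"
  shows "\<exists>!h. h \<in> hom C Z (Prd C A B) \<and> h \<cdot> Pr0 C A B = f \<and> h \<cdot> Pr1 C A B = g"
proof -
  have "A \<in> Obj C" "B \<in> Obj C"
    using assms hom_objs by auto
  then show ?thesis
    using cartesian assms unfolding cartesian_def by blast
qed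

lemma pair_props:
  assumes f: "f \<in> hom C Z A" and g: "g \<in> hom C Z B"
  shows "pair C f g \<in> hom C Z (Prd C A B) \<and> pair C f g \<cdot> Pr0 C A B = f \<and> pair C f g \<cdot> Pr1 C A B = g"
proof -
  have "Dom C f = Z" "Cod C f = A" "Cod C g = B"
    using f g by (auto simp: hom_def)
  then show ?thesis
    unfolding pair_def by (simp add: theI'[OF product_universal[OF f g]])
qed

lemma pair_hom: "f \<in> hom C Z A \<Longrightarrow> g \<in> hom C Z B \<Longrightarrow> pair C f g \<in> hom C Z (Prd C A B)"
  using pair_props by blast

lemma pair_pr0: "f \<in> hom C Z A \<Longrightarrow> g \<in> hom C Z B \<Longrightarrow> pair C f g \<cdot> Pr0 C A B = f"
  using pair_props by blast

lemma pair_pr1: "f \<in> hom C Z A \<Longrightarrow> g \<in> hom C Z B \<Longrightarrow> pair C f g \<cdot> Pr1 C A B = g"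
  using pair_props by blast

lemma pair_unique:
  assumes "f \<in> hom C Z A" and "g \<in> hom C Z B" and "h \<in> hom C Z (Prd C A B)"
    and "h \<cdot> Pr0 C A B = f" and "h \<cdot> Pr1 C A B = g"
  shows "pair C f g = h"
  using product_universal[OF assms(1,2)] pair_props[OF assms(1,2)] assms(3-5) by blast

lemma prod_ext:
  assumes h: "h \<in> hom C Z (Prd C A B)" and k: "k \<in> hom C Z (Prd C A B)"
    and A: "A \<in> Obj C" and B: "B \<in> Obj C"
    and "h \<cdot> Pr0 C A B = k \<cdot> Pr0 C A B" and "h \<cdot> Pr1 C A B = k \<cdot> Pr1 C A B"
  shows "h = k"
proof -
  have "k \<cdot> Pr0 C A B \<in> hom C Z A" "k \<cdot> Pr1 C A B \<in> hom C Z B"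
    using comp_hom[OF k] pr0_hom[OF A B] pr1_hom[OF A B] by auto
  then show ?thesis
    using pair_unique h k assms(5,6) by metis
qed

lemma comp_pair:
  assumes h: "h \<in> hom C W Z" and f: "f \<in> hom C Z A" and g: "g \<in> hom C Z B"
  shows "h \<cdot> pair C f g = pair C (h \<cdot> f) (h \<cdot> g)"
proof (rule sym, rule pair_unique[OF comp_hom[OF h f] comp_hom[OF h g]])
  have A: "A \<in> Obj C" and B: "B \<in> Obj C"
    using hom_objs f g by auto
  show "h \<cdot> pair C f g \<in> hom C W (Prd C A B)"
    using comp_hom[OF h pair_hom[OF f g]] .
  show "h \<cdot> pair C f g \<cdot> Pr0 C A B = h \<cdot> f" "h \<cdot> pair C f g \<cdot> Pr1 C A B = h \<cdot> g"
    using comp_assoc[OF h pair_hom[OF f g]] pr0_hom[OF A B] pr1_hom[OF A B] pair_pr0[OF f g]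
      pair_pr1[OF f g] by auto
qed

lemma PO_obj: "A \<in> Obj C \<Longrightarrow> PO C A \<in> Obj C"
  by (simp add: PO_def prd_obj)

lemma po_obj: "A \<in> Obj C \<Longrightarrow> po n A \<in> Obj C"
  by (induction n) (auto simp: PO_obj)

lemma pr0_PO_hom: "A \<in> Obj C \<Longrightarrow> Pr0 C A A \<in> hom C (PO C A) A"
  using pr0_hom by (simp add: PO_def)

lemma pr1_PO_hom: "A \<in> Obj C \<Longrightarrow> Pr1 C A A \<in> hom C (PO C A) A"
  using pr1_hom by (simp add: PO_def)

lemma PO_ext:
  assumes "h \<in> hom C Z (PO C A)" and "k \<in> hom C Z (PO C A)" and "A \<in> Obj C"
    and "h \<cdot> Pr0 C A A = k \<cdot> Pr0 C A A" and "h \<cdot> Pr1 C A A = k \<cdot> Pr1 C A A"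
  shows "h = k"
  using prod_ext[of h Z A A k] assms by (simp add: PO_def)

lemma PA_eq: "f \<in> hom C A B \<Longrightarrow> PA C f = pair C (Pr0 C A A \<cdot> f) (Pr1 C A A \<cdot> f)"
  by (simp add: PA_def hom_def)

lemma PA_props:
  assumes f: "f \<in> hom C A B"
  shows "PA C f \<in> hom C (PO C A) (PO C B) \<and> PA C f \<cdot> Pr0 C B B = Pr0 C A A \<cdot> f
       \<and> PA C f \<cdot> Pr1 C B B = Pr1 C A A \<cdot> f"
proof -
  have A: "A \<in> Obj C"
    using hom_objs f by auto
  have "Pr0 C A A \<cdot> f \<in> hom C (PO C A) B" "Pr1 C A A \<cdot> f \<in> hom C (PO C A) B"
    using comp_hom[OF pr0_PO_hom[OF A] f] comp_hom[OF pr1_PO_hom[OF A] f] by auto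
  then show ?thesis
    unfolding PA_eq[OF f] using pair_props by (simp add: PO_def)
qed

lemma PA_hom: "f \<in> hom C A B \<Longrightarrow> PA C f \<in> hom C (PO C A) (PO C B)"
  using PA_props by blast

lemma PA_pr0: "f \<in> hom C A B \<Longrightarrow> PA C f \<cdot> Pr0 C B B = Pr0 C A A \<cdot> f"
  using PA_props by blast

lemma PA_pr1: "f \<in> hom C A B \<Longrightarrow> PA C f \<cdot> Pr1 C B B = Pr1 C A A \<cdot> f"
  using PA_props by blast

lemma PA_comp:
  assumes f: "f \<in> hom C A B" and g: "g \<in> hom C B D"
  shows "PA C (f \<cdot> g) = PA C f \<cdot> PA C g"
proof -
  have A: "A \<in> Obj C" and B: "B \<in> Obj C" and D: "D \<in> Obj C"
    using hom_objs f g by auto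
  have fg: "f \<cdot> g \<in> hom C A D"
    by (rule comp_hom[OF f g])
  show ?thesis
  proof (rule PO_ext[OF PA_hom[OF fg] comp_hom[OF PA_hom[OF f] PA_hom[OF g]] D])
    show "PA C (f \<cdot> g) \<cdot> Pr0 C D D = PA C f \<cdot> PA C g \<cdot> Pr0 C D D"
      by (simp add: PA_pr0[OF fg] comp_assoc[OF PA_hom[OF f] PA_hom[OF g] pr0_PO_hom[OF D]]
          PA_pr0[OF g] flip: comp_assoc[OF PA_hom[OF f] pr0_PO_hom[OF B] g]
          comp_assoc[OF pr0_PO_hom[OF A] f g] PA_pr0[OF f])
    show "PA C (f \<cdot> g) \<cdot> Pr1 C D D = PA C f \<cdot> PA C g \<cdot> Pr1 C D D"
      by (simp add: PA_pr1[OF fg] comp_assoc[OF PA_hom[OF f] PA_hom[OF g] pr1_PO_hom[OF D]]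
          PA_pr1[OF g] flip: comp_assoc[OF PA_hom[OF f] pr1_PO_hom[OF B] g]
          comp_assoc[OF pr1_PO_hom[OF A] f g] PA_pr1[OF f])
  qed
qed

lemma pa_hom: "f \<in> hom C A B \<Longrightarrow> pa n f \<in> hom C (po n A) (po n B)"
  by (induction n) (auto simp: PA_hom)

lemma pa_comp:
  assumes "f \<in> hom C A B" and "g \<in> hom C B D"
  shows "pa n (f \<cdot> g) = pa n f \<cdot> pa n g"
  by (induction n) (auto simp: PA_comp[OF pa_hom[OF assms(1)] pa_hom[OF assms(2)]])

lemma po_Suc_right: "po (Suc n) A = po n (PO C A)"
  by (simp add: funpow_Suc_right del: funpow.simps)

lemma pa_Suc_right: "pa (Suc n) f = pa n (PA C f)"
  by (simp add: funpow_Suc_right del: funpow.simps)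

lemma po_add: "po (k + m) A = po k (po m A)"
  by (simp add: funpow_add)

lemma pa_add: "pa (k + m) f = pa k (pa m f)"
  by (simp add: funpow_add)

lemma idseq_hom: "A \<in> Obj C \<Longrightarrow> idseq C A n \<in> hom C (po n A) A"
  by (induction n) (auto simp: id_hom intro: comp_hom pr1_PO_hom po_obj)

lemma idseq_natural: "f \<in> hom C A B \<Longrightarrow> pa n f \<cdot> idseq C B n = idseq C A n \<cdot> f"
proof (induction n)
  case 0
  then show ?case
    using id_left id_right by simp
next
  case (Suc n)
  have A: "A \<in> Obj C" and B: "B \<in> Obj C"
    using hom_objs Suc.prems by auto
  have f: "pa n f \<in> hom C (po n A) (po n B)"
    by (rule pa_hom[OF Suc.prems])
  have "pa (Suc n) f \<cdot> idseq C B (Suc n) = (PA C (pa n f) \<cdot> Pr1 C (po n B) (po n B)) \<cdot> idseq C B n"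
    using comp_assoc[OF PA_hom[OF f] pr1_PO_hom[OF po_obj[OF B]] idseq_hom[OF B]] by simp
  also have "\<dots> = Pr1 C (po n A) (po n A) \<cdot> (pa n f \<cdot> idseq C B n)"
    by (simp add: PA_pr1[OF f] comp_assoc[OF pr1_PO_hom[OF po_obj[OF A]] f idseq_hom[OF B]])
  also have "\<dots> = idseq C A (Suc n) \<cdot> f"
    using comp_assoc[OF pr1_PO_hom[OF po_obj[OF A]] idseq_hom[OF A] Suc.prems] Suc.IH[OF Suc.prems]
    by simp
  finally show ?case .
qed

lemma idseq_add: "A \<in> Obj C \<Longrightarrow> idseq C A (k + m) = idseq C (po m A) k \<cdot> idseq C A m"
proof (induction k)
  case 0
  then show ?case
    using id_left[OF idseq_hom] by simp
next
  case (Suc k)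
  have "idseq C A (Suc k + m) = Pr1 C (po k (po m A)) (po k (po m A)) \<cdot> (idseq C (po m A) k \<cdot> idseq C A m)"
    using Suc by (simp add: po_add del: funpow.simps)
  also have "\<dots> = idseq C (po m A) (Suc k) \<cdot> idseq C A m"
    using comp_assoc[OF pr1_PO_hom[OF po_obj[OF po_obj]] idseq_hom[OF po_obj] idseq_hom] Suc.prems
    by simp
  finally show ?case .
qed

lemma idseq_Suc_right: "A \<in> Obj C \<Longrightarrow> idseq C A (Suc n) = idseq C (PO C A) n \<cdot> Pr1 C A A"
  using idseq_add[of A n 1] id_right[OF pr1_PO_hom] by simp

section \<open>Pre-D-sequences and their tangent\<close>

lemma pre_dseq_hom: "pre_dseq C A B f \<Longrightarrow> f n \<in> hom C (po n A) B"
  by (simp add: pre_dseq_def)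

lemma pre_dseq_0:
  assumes "pre_dseq C A B f"
  shows "f 0 \<in> hom C A B" "Dom C (f 0) = A" "Cod C (f 0) = B" "A \<in> Obj C" "B \<in> Obj C"
  using pre_dseq_hom[OF assms, of 0] hom_objs by (auto simp: hom_def)

lemma pre_dseq_idseq: "A \<in> Obj C \<Longrightarrow> pre_dseq C A A (idseq C A)"
  by (simp add: pre_dseq_def idseq_hom)

lemma Tseq_eq: "pre_dseq C A B f \<Longrightarrow> Tseq C f n = pair C (pa n (Pr0 C A A) \<cdot> f n) (f (Suc n))"
  by (simp add: Tseq_def pre_dseq_0)

lemma Tseq_props:
  assumes f: "pre_dseq C A B f"
  shows "Tseq C f n \<in> hom C (po n (PO C A)) (PO C B)"
    and "Tseq C f n \<cdot> Pr0 C B B = pa n (Pr0 C A A) \<cdot> f n"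
    and "Tseq C f n \<cdot> Pr1 C B B = f (Suc n)"
proof -
  have "pa n (Pr0 C A A) \<cdot> f n \<in> hom C (po n (PO C A)) B"
    using comp_hom[OF pa_hom[OF pr0_PO_hom] pre_dseq_hom[OF f]] pre_dseq_0[OF f] by blast
  moreover have "f (Suc n) \<in> hom C (po n (PO C A)) B"
    using pre_dseq_hom[OF f, of "Suc n"] by (simp only: po_Suc_right)
  ultimately show "Tseq C f n \<in> hom C (po n (PO C A)) (PO C B)"
    and "Tseq C f n \<cdot> Pr0 C B B = pa n (Pr0 C A A) \<cdot> f n"
    and "Tseq C f n \<cdot> Pr1 C B B = f (Suc n)"
    using pair_props by (auto simp: Tseq_eq[OF f] PO_def)
qed

lemmas T_hom = Tseq_props(1) and T_pr0 = Tseq_props(2) and T_pr1 = Tseq_props(3)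

lemma T_pre_dseq: "pre_dseq C A B f \<Longrightarrow> pre_dseq C (PO C A) (PO C B) (Tseq C f)"
  using T_hom by (simp add: pre_dseq_def)

lemma Tn_pre_dseq: "pre_dseq C A B f \<Longrightarrow> pre_dseq C (po n A) (po n B) ((Tseq C ^^ n) f)"
  by (induction n) (auto simp: T_pre_dseq)

lemma Tn_0_hom: "pre_dseq C A B f \<Longrightarrow> (Tseq C ^^ n) f 0 \<in> hom C (po n A) (po n B)"
  using pre_dseq_hom[OF Tn_pre_dseq, of A B f n 0] by simp

lemma Tn_idseq_right: "pre_dseq C A B f \<Longrightarrow> (Tseq C ^^ n) f k \<cdot> idseq C B n = f (k + n)"
proof (induction n arbitrary: k)
  case 0
  then show ?case
    using id_right[OF pre_dseq_hom[OF 0]] by simp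
next
  case (Suc n)
  have B: "B \<in> Obj C"
    using pre_dseq_0[OF Suc.prems] by simp
  have g: "pre_dseq C (po n A) (po n B) ((Tseq C ^^ n) f)"
    by (rule Tn_pre_dseq[OF Suc.prems])
  have "(Tseq C ^^ Suc n) f k \<cdot> idseq C B (Suc n)
      = (Tseq C ((Tseq C ^^ n) f) k \<cdot> Pr1 C (po n B) (po n B)) \<cdot> idseq C B n"
    using comp_assoc[OF T_hom[OF g] pr1_PO_hom[OF po_obj[OF B]] idseq_hom[OF B]] by simp
  also have "\<dots> = f (Suc k + n)"
    using T_pr1[OF g] Suc.IH[OF Suc.prems] by simp
  finally show ?case
    by simp
qed

lemma T_idseq:
  assumes A: "A \<in> Obj C"
  shows "Tseq C (idseq C A) = idseq C (PO C A)"
proof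
  fix k
  have i: "pre_dseq C A A (idseq C A)"
    by (rule pre_dseq_idseq[OF A])
  show "Tseq C (idseq C A) k = idseq C (PO C A) k"
    by (rule PO_ext[OF T_hom[OF i] idseq_hom[OF PO_obj[OF A]] A])
      (simp_all add: T_pr0[OF i] T_pr1[OF i] idseq_natural[OF pr0_PO_hom[OF A]] idseq_Suc_right[OF A]
        del: idseq.simps)
qed

lemma Tn_idseq: "A \<in> Obj C \<Longrightarrow> (Tseq C ^^ n) (idseq C A) = idseq C (po n A)"
  by (induction n) (auto simp: T_idseq po_obj)

lemma compD_pre_dseq: "pre_dseq C A B f \<Longrightarrow> pre_dseq C B D g \<Longrightarrow> pre_dseq C A D (compD C f g)"
  unfolding pre_dseq_def compD_apply using comp_hom Tn_0_hom pre_dseq_def by metis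

lemma compD_idseq_left: "pre_dseq C A B g \<Longrightarrow> compD C (idseq C A) g = g"
  using id_left[OF pre_dseq_hom] pre_dseq_0 by (simp add: compD_apply fun_eq_iff Tn_idseq)

lemma compD_idseq_right: "pre_dseq C A B f \<Longrightarrow> compD C f (idseq C B) = f"
  using Tn_idseq_right[of A B f _ 0] by (simp add: compD_apply fun_eq_iff)

lemma T_postcomp:
  assumes g: "pre_dseq C A B g" and x: "x \<in> hom C B D"
  shows "Tseq C (\<lambda>n. g n \<cdot> x) = (\<lambda>n. Tseq C g n \<cdot> PA C x)"
proof
  fix m
  have A: "A \<in> Obj C" and B: "B \<in> Obj C" and D: "D \<in> Obj C"
    using pre_dseq_0[OF g] hom_objs[OF x] by auto
  have gx: "pre_dseq C A D (\<lambda>n. g n \<cdot> x)"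
    using comp_hom[OF pre_dseq_hom[OF g] x] by (simp add: pre_dseq_def)
  have Tg: "Tseq C g m \<in> hom C (po m (PO C A)) (PO C B)"
    by (rule T_hom[OF g])
  have "Tseq C g m \<cdot> PA C x \<cdot> Pr0 C D D = pa m (Pr0 C A A) \<cdot> (g m \<cdot> x)"
    by (simp add: comp_assoc[OF Tg PA_hom[OF x] pr0_PO_hom[OF D]] PA_pr0[OF x] T_pr0[OF g]
        comp_assoc[OF pa_hom[OF pr0_PO_hom[OF A]] pre_dseq_hom[OF g] x]
        flip: comp_assoc[OF Tg pr0_PO_hom[OF B] x])
  moreover have "Tseq C g m \<cdot> PA C x \<cdot> Pr1 C D D = g (Suc m) \<cdot> x"
    by (simp add: comp_assoc[OF Tg PA_hom[OF x] pr1_PO_hom[OF D]] PA_pr1[OF x] T_pr1[OF g]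
        flip: comp_assoc[OF Tg pr1_PO_hom[OF B] x])
  ultimately show "Tseq C (\<lambda>n. g n \<cdot> x) m = Tseq C g m \<cdot> PA C x"
    by (intro PO_ext[OF T_hom[OF gx] comp_hom[OF Tg PA_hom[OF x]] D])
      (simp_all add: T_pr0[OF gx] T_pr1[OF gx])
qed

lemma T_precomp:
  assumes x: "x \<in> hom C A B" and g: "pre_dseq C B D g"
  shows "Tseq C (\<lambda>n. pa n x \<cdot> g n) = (\<lambda>n. pa n (PA C x) \<cdot> Tseq C g n)"
proof
  fix m
  have A: "A \<in> Obj C" and B: "B \<in> Obj C" and D: "D \<in> Obj C"
    using pre_dseq_0[OF g] hom_objs[OF x] by auto
  have xg: "pre_dseq C A D (\<lambda>n. pa n x \<cdot> g n)"
    using comp_hom[OF pa_hom[OF x] pre_dseq_hom[OF g]] by (simp add: pre_dseq_def)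
  have Px: "pa m (PA C x) \<in> hom C (po m (PO C A)) (po m (PO C B))"
    by (rule pa_hom[OF PA_hom[OF x]])
  have "pa m (PA C x) \<cdot> Tseq C g m \<cdot> Pr0 C D D = (pa m (PA C x) \<cdot> pa m (Pr0 C B B)) \<cdot> g m"
    by (simp add: comp_assoc[OF Px T_hom[OF g] pr0_PO_hom[OF D]] T_pr0[OF g]
        comp_assoc[OF Px pa_hom[OF pr0_PO_hom[OF B]] pre_dseq_hom[OF g]])
  also have "\<dots> = pa m (Pr0 C A A \<cdot> x) \<cdot> g m"
    by (simp add: PA_pr0[OF x] flip: pa_comp[OF PA_hom[OF x] pr0_PO_hom[OF B]])
  also have "\<dots> = pa m (Pr0 C A A) \<cdot> (pa m x \<cdot> g m)"
    by (simp add: pa_comp[OF pr0_PO_hom[OF A] x]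
        comp_assoc[OF pa_hom[OF pr0_PO_hom[OF A]] pa_hom[OF x] pre_dseq_hom[OF g]])
  finally have "pa m (PA C x) \<cdot> Tseq C g m \<cdot> Pr0 C D D = pa m (Pr0 C A A) \<cdot> (pa m x \<cdot> g m)" .
  moreover have "pa m (PA C x) \<cdot> Tseq C g m \<cdot> Pr1 C D D = pa (Suc m) x \<cdot> g (Suc m)"
    by (simp add: comp_assoc[OF Px T_hom[OF g] pr1_PO_hom[OF D]] T_pr1[OF g] pa_Suc_right
        del: funpow.simps)
  ultimately show "Tseq C (\<lambda>n. pa n x \<cdot> g n) m = pa m (PA C x) \<cdot> Tseq C g m"
    by (intro PO_ext[OF T_hom[OF xg] comp_hom[OF Px T_hom[OF g]] D])
      (simp_all add: T_pr0[OF xg] T_pr1[OF xg] del: funpow.simps)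
qed

lemma Tn_pr0_natural:
  assumes f: "pre_dseq C A B f"
  shows "(\<lambda>m. (Tseq C ^^ k) (Tseq C f) m \<cdot> pa k (Pr0 C B B))
       = (\<lambda>m. pa m (pa k (Pr0 C A A)) \<cdot> (Tseq C ^^ k) f m)"
proof (induction k)
  case 0
  show ?case
    using T_pr0[OF f] by simp
next
  case (Suc k)
  have A: "A \<in> Obj C" and B: "B \<in> Obj C"
    using pre_dseq_0[OF f] by auto
  have "(\<lambda>m. (Tseq C ^^ Suc k) (Tseq C f) m \<cdot> pa (Suc k) (Pr0 C B B))
      = Tseq C (\<lambda>m. (Tseq C ^^ k) (Tseq C f) m \<cdot> pa k (Pr0 C B B))"
    using T_postcomp[OF Tn_pre_dseq[OF T_pre_dseq[OF f]] pa_hom[OF pr0_PO_hom[OF B]]] by simp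
  also have "\<dots> = Tseq C (\<lambda>m. pa m (pa k (Pr0 C A A)) \<cdot> (Tseq C ^^ k) f m)"
    by (simp only: Suc.IH)
  also have "\<dots> = (\<lambda>m. pa m (pa (Suc k) (Pr0 C A A)) \<cdot> (Tseq C ^^ Suc k) f m)"
    using T_precomp[OF pa_hom[OF pr0_PO_hom[OF A]] Tn_pre_dseq[OF f]] by simp
  finally show ?case .
qed

lemma T_compD:
  assumes f: "pre_dseq C A B f" and g: "pre_dseq C B D g"
  shows "Tseq C (compD C f g) = compD C (Tseq C f) (Tseq C g)"
proof
  fix k
  have A: "A \<in> Obj C" and B: "B \<in> Obj C" and D: "D \<in> Obj C"
    using pre_dseq_0[OF f] pre_dseq_0[OF g] by auto
  have fg: "pre_dseq C A D (compD C f g)"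
    by (rule compD_pre_dseq[OF f g])
  have TfTg: "pre_dseq C (PO C A) (PO C D) (compD C (Tseq C f) (Tseq C g))"
    by (rule compD_pre_dseq[OF T_pre_dseq[OF f] T_pre_dseq[OF g]])
  have Tkf: "(Tseq C ^^ k) (Tseq C f) 0 \<in> hom C (po k (PO C A)) (po k (PO C B))"
    by (rule Tn_0_hom[OF T_pre_dseq[OF f]])
  have "compD C (Tseq C f) (Tseq C g) k \<cdot> Pr0 C D D
      = ((Tseq C ^^ k) (Tseq C f) 0 \<cdot> pa k (Pr0 C B B)) \<cdot> g k"
    by (simp add: compD_apply comp_assoc[OF Tkf T_hom[OF g] pr0_PO_hom[OF D]] T_pr0[OF g]
        comp_assoc[OF Tkf pa_hom[OF pr0_PO_hom[OF B]] pre_dseq_hom[OF g]] del: funpow.simps)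
  also have "\<dots> = pa k (Pr0 C A A) \<cdot> compD C f g k"
    using fun_cong[OF Tn_pr0_natural[OF f, of k], of 0]
      comp_assoc[OF pa_hom[OF pr0_PO_hom[OF A]] Tn_0_hom[OF f] pre_dseq_hom[OF g]]
    by (simp add: compD_apply del: funpow.simps)
  finally have "compD C (Tseq C f) (Tseq C g) k \<cdot> Pr0 C D D = Tseq C (compD C f g) k \<cdot> Pr0 C D D"
    by (simp add: T_pr0[OF fg])
  moreover have "compD C (Tseq C f) (Tseq C g) k \<cdot> Pr1 C D D = Tseq C (compD C f g) k \<cdot> Pr1 C D D"
    by (simp add: compD_apply comp_assoc[OF Tkf T_hom[OF g] pr1_PO_hom[OF D]] T_pr1[OF g] T_pr1[OF fg]
        funpow_Suc_right del: funpow.simps)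
  ultimately show "Tseq C (compD C f g) k = compD C (Tseq C f) (Tseq C g) k"
    by (intro PO_ext[OF T_hom[OF fg] pre_dseq_hom[OF TfTg] D]) simp_all
qed

lemma Tn_compD:
  assumes "pre_dseq C A B f" and "pre_dseq C B D g"
  shows "(Tseq C ^^ n) (compD C f g) = compD C ((Tseq C ^^ n) f) ((Tseq C ^^ n) g)"
  by (induction n) (simp_all add: T_compD[OF Tn_pre_dseq[OF assms(1)] Tn_pre_dseq[OF assms(2)]])

lemma compD_assoc:
  assumes f: "pre_dseq C A B f" and g: "pre_dseq C B D g" and h: "pre_dseq C D E h"
  shows "compD C (compD C f g) h = compD C f (compD C g h)"
proof
  fix n
  show "compD C (compD C f g) h n = compD C f (compD C g h) n"
    using comp_assoc[OF Tn_0_hom[OF f] Tn_0_hom[OF g] pre_dseq_hom[OF h]]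
    by (simp add: compD_apply Tn_compD[OF f g] del: funpow.simps)
qed

lemma lin_seq_pre_dseq: "x \<in> hom C A B \<Longrightarrow> pre_dseq C A B (lin_seq C A x)"
  unfolding pre_dseq_def lin_seq_def using comp_hom idseq_hom hom_objs by blast

lemma lin_seq_0: "x \<in> hom C A B \<Longrightarrow> lin_seq C A x 0 = x"
  by (simp add: lin_seq_def id_left)

lemma compD_lin_seq_right:
  assumes h: "pre_dseq C Z A h" and x: "x \<in> hom C A B"
  shows "compD C h (lin_seq C A x) = (\<lambda>n. h n \<cdot> x)"
proof
  fix n
  have A: "A \<in> Obj C"
    using hom_objs x by blast
  show "compD C h (lin_seq C A x) n = h n \<cdot> x"
    by (simp add: compD_apply lin_seq_def Tn_idseq_right[OF h, of n 0]
        flip: comp_assoc[OF Tn_0_hom[OF h] idseq_hom[OF A] x] del: funpow.simps)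
qed

lemma T_lin_seq:
  assumes x: "x \<in> hom C A B"
  shows "Tseq C (lin_seq C A x) = lin_seq C (PO C A) (PA C x)"
  using T_postcomp[OF pre_dseq_idseq x] T_idseq hom_objs[OF x] by (simp add: lin_seq_def)

lemma Tn_lin_seq:
  assumes "x \<in> hom C A B"
  shows "(Tseq C ^^ k) (lin_seq C A x) = lin_seq C (po k A) (pa k x)"
  by (induction k) (simp_all add: T_lin_seq[OF pa_hom[OF assms]])

lemma compD_lin_seq_left:
  assumes x: "x \<in> hom C A B"
  shows "compD C (lin_seq C A x) s = (\<lambda>k. pa k x \<cdot> s k)"
  using Tn_lin_seq[OF x] lin_seq_0[OF pa_hom[OF x]] by (simp add: compD_def)

section \<open>The cartesian category D-bar[X]\<close>

lemma category_Dbar: "category (Dbar C)"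
  unfolding category_def
proof (intro conjI ballI impI)
  fix A
  assume "A \<in> Obj (Dbar C)"
  then show "Idt (Dbar C) A \<in> hom (Dbar C) A A"
    by (simp add: hom_Dbar pre_dseq_idseq)
next
  fix f
  assume "f \<in> Arr (Dbar C)"
  then have f: "pre_dseq C (Dom C (f 0)) (Cod C (f 0)) f"
    by simp
  show "Dom (Dbar C) f \<in> Obj (Dbar C)" "Cod (Dbar C) f \<in> Obj (Dbar C)"
    using pre_dseq_0[OF f] by auto
  show "Cmp (Dbar C) (Idt (Dbar C) (Dom (Dbar C) f)) f = f"
    and "Cmp (Dbar C) f (Idt (Dbar C) (Cod (Dbar C) f)) = f"
    using compD_idseq_left[OF f] compD_idseq_right[OF f] by auto
next
  fix f g
  assume "f \<in> Arr (Dbar C)" "g \<in> Arr (Dbar C)" "Cod (Dbar C) f = Dom (Dbar C) g"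
  then show "Cmp (Dbar C) f g \<in> hom (Dbar C) (Dom (Dbar C) f) (Cod (Dbar C) g)"
    using compD_pre_dseq by (simp add: hom_Dbar)
next
  fix f g h
  assume "f \<in> Arr (Dbar C)" "g \<in> Arr (Dbar C)" "h \<in> Arr (Dbar C)"
    "Cod (Dbar C) f = Dom (Dbar C) g" "Cod (Dbar C) g = Dom (Dbar C) h"
  then show "Cmp (Dbar C) (Cmp (Dbar C) f g) h = Cmp (Dbar C) f (Cmp (Dbar C) g h)"
    using compD_assoc by simp
qed

lemma Dbar_terminal_unique:
  assumes "A \<in> Obj C"
  shows "\<exists>!h. pre_dseq C A (Trm C) h"
proof -
  have "\<forall>n. \<exists>!h. h \<in> hom C (po n A) (Trm C)"
    using terminal_unique po_obj assms by blast
  then obtain h where h: "\<And>n. h n \<in> hom C (po n A) (Trm C)"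
    by metis
  show ?thesis
  proof (rule ex1I[of _ h])
    show "pre_dseq C A (Trm C) h"
      using h by (simp add: pre_dseq_def)
  next
    fix h'
    assume "pre_dseq C A (Trm C) h'"
    then show "h' = h"
      using h terminal_unique[OF po_obj[OF assms]] by (metis pre_dseq_def ext)
  qed
qed

lemma Dbar_product_universal:
  assumes f: "pre_dseq C Z A f" and g: "pre_dseq C Z B g"
  shows "\<exists>!h. pre_dseq C Z (Prd C A B) h \<and>
           compD C h (lin_seq C (Prd C A B) (Pr0 C A B)) = f \<and>
           compD C h (lin_seq C (Prd C A B) (Pr1 C A B)) = g"
proof -
  have A: "A \<in> Obj C" and B: "B \<in> Obj C"
    using pre_dseq_0 f g by auto
  have projections: "compD C h (lin_seq C (Prd C A B) (Pr0 C A B)) = (\<lambda>n. h n \<cdot> Pr0 C A B)"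
    "compD C h (lin_seq C (Prd C A B) (Pr1 C A B)) = (\<lambda>n. h n \<cdot> Pr1 C A B)"
    if "pre_dseq C Z (Prd C A B) h" for h
    using compD_lin_seq_right[OF that] pr0_hom[OF A B] pr1_hom[OF A B] by auto
  have fg: "pre_dseq C Z (Prd C A B) (\<lambda>n. pair C (f n) (g n))"
    using pair_hom pre_dseq_hom f g by (simp add: pre_dseq_def)
  show ?thesis
  proof (rule ex1I[of _ "\<lambda>n. pair C (f n) (g n)"])
    show "pre_dseq C Z (Prd C A B) (\<lambda>n. pair C (f n) (g n)) \<and>
        compD C (\<lambda>n. pair C (f n) (g n)) (lin_seq C (Prd C A B) (Pr0 C A B)) = f \<and>
        compD C (\<lambda>n. pair C (f n) (g n)) (lin_seq C (Prd C A B) (Pr1 C A B)) = g"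
      using pair_pr0[OF pre_dseq_hom[OF f] pre_dseq_hom[OF g]]
        pair_pr1[OF pre_dseq_hom[OF f] pre_dseq_hom[OF g]]
      by (simp add: fg projections[OF fg])
  next
    fix h
    assume "pre_dseq C Z (Prd C A B) h \<and>
        compD C h (lin_seq C (Prd C A B) (Pr0 C A B)) = f \<and>
        compD C h (lin_seq C (Prd C A B) (Pr1 C A B)) = g"
    then show "h = (\<lambda>n. pair C (f n) (g n))"
      using pair_unique[OF pre_dseq_hom[OF f] pre_dseq_hom[OF g] pre_dseq_hom]
      by (auto simp: projections fun_eq_iff)
  qed
qed

lemma cartesian_Dbar: "cartesian (Dbar C)"
  unfolding cartesian_def
  using category_Dbar terminal_obj Dbar_terminal_unique prd_obj Dbar_product_universal
    lin_seq_pre_dseq[OF pr0_hom] lin_seq_pre_dseq[OF pr1_hom]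
  by (simp add: hom_Dbar)

end

section \<open>Counit and comultiplication\<close>

lemma cartesian_category_Dbar: "cartesian_category C \<Longrightarrow> cartesian_category (Dbar C)"
  by (simp add: cartesian_category_def cartesian_category.cartesian_Dbar)

context cartesian_category
begin

interpretation D: cartesian_category "Dbar C"
  by (rule cartesian_category_Dbar) unfold_locales

lemma pair_Dbar:
  assumes f: "pre_dseq C Z A f" and g: "pre_dseq C Z B g"
  shows "pair (Dbar C) f g = (\<lambda>k. pair C (f k) (g k))"
proof (rule D.pair_unique)
  have A: "A \<in> Obj C" and B: "B \<in> Obj C"
    using pre_dseq_0 f g by auto
  have fg: "pre_dseq C Z (Prd C A B) (\<lambda>k. pair C (f k) (g k))"
    using pair_hom pre_dseq_hom f g by (simp add: pre_dseq_def)
  show "f \<in> hom (Dbar C) Z A" "g \<in> hom (Dbar C) Z B"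
    and "(\<lambda>k. pair C (f k) (g k)) \<in> hom (Dbar C) Z (Prd (Dbar C) A B)"
    using f g fg by (auto simp: hom_Dbar)
  show "Cmp (Dbar C) (\<lambda>k. pair C (f k) (g k)) (Pr0 (Dbar C) A B) = f"
    and "Cmp (Dbar C) (\<lambda>k. pair C (f k) (g k)) (Pr1 (Dbar C) A B) = g"
    using compD_lin_seq_right[OF fg] pr0_hom[OF A B] pr1_hom[OF A B]
      pair_pr0[OF pre_dseq_hom[OF f] pre_dseq_hom[OF g]] pair_pr1[OF pre_dseq_hom[OF f] pre_dseq_hom[OF g]]
    by simp_all
qed

lemma PA_Dbar:
  assumes g: "pre_dseq C A B g"
  shows "PA (Dbar C) g = (\<lambda>k. pair C (pa k (Pr0 C A A) \<cdot> g k) (pa k (Pr1 C A A) \<cdot> g k))"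
proof -
  have A: "A \<in> Obj C"
    using pre_dseq_0 g by auto
  have "pre_dseq C (PO C A) B (\<lambda>k. pa k (Pr0 C A A) \<cdot> g k)"
    and "pre_dseq C (PO C A) B (\<lambda>k. pa k (Pr1 C A A) \<cdot> g k)"
    using compD_pre_dseq[OF lin_seq_pre_dseq g] pr0_PO_hom[OF A] pr1_PO_hom[OF A]
    by (simp_all add: compD_lin_seq_left)
  then show ?thesis
    using pair_Dbar compD_lin_seq_left[OF pr0_PO_hom[OF A]] compD_lin_seq_left[OF pr1_PO_hom[OF A]]
    by (simp add: PA_def pre_dseq_0[OF g] PO_def)
qed

lemma PA_Dbar_lin_seq:
  assumes x: "x \<in> hom C A B"
  shows "PA (Dbar C) (lin_seq C A x) = lin_seq C (PO C A) (PA C x)"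
proof
  fix k
  have A: "A \<in> Obj C"
    using hom_objs x by auto
  have i: "idseq C (PO C A) k \<in> hom C (po k (PO C A)) (PO C A)"
    by (rule idseq_hom[OF PO_obj[OF A]])
  have "pa k p \<cdot> (idseq C A k \<cdot> x) = idseq C (PO C A) k \<cdot> (p \<cdot> x)"
    if p: "p \<in> hom C (PO C A) A" for p
    using comp_assoc[OF pa_hom[OF p] idseq_hom[OF A] x, symmetric]
      idseq_natural[OF p, of k] comp_assoc[OF i p x] by simp
  then show "PA (Dbar C) (lin_seq C A x) k = lin_seq C (PO C A) (PA C x) k"
    using PA_Dbar[OF lin_seq_pre_dseq[OF x]] comp_pair[OF i comp_hom[OF pr0_PO_hom[OF A] x]
        comp_hom[OF pr1_PO_hom[OF A] x]] pr0_PO_hom[OF A] pr1_PO_hom[OF A]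
    by (simp add: lin_seq_def PA_eq[OF x])
qed

lemma pa_Dbar_lin_seq:
  assumes "x \<in> hom C A B"
  shows "(PA (Dbar C) ^^ m) (lin_seq C A x) = lin_seq C (po m A) (pa m x)"
  by (induction m) (simp_all add: PA_Dbar_lin_seq[OF pa_hom[OF assms]])

lemma Dseq_power_pre_dseq: "pre_dseq C A B f \<Longrightarrow> pre_dseq C (po n A) B ((Dseq ^^ n) f)"
  by (simp add: pre_dseq_def Dseq_power po_add[symmetric])

lemma comult_pre_dseq: "pre_dseq C A B f \<Longrightarrow> pre_dseq (Dbar C) A B (\<lambda>n. (Dseq ^^ n) f)"
  using Dseq_power_pre_dseq by (simp add: pre_dseq_def[of "Dbar C"] hom_Dbar)

lemma T_Dbar_comult:
  assumes f: "pre_dseq C A B f"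
  shows "Tseq (Dbar C) (\<lambda>n. (Dseq ^^ n) f) = (\<lambda>n. (Dseq ^^ n) (Tseq C f))"
proof
  fix m
  have A: "A \<in> Obj C"
    using pre_dseq_0 f by auto
  have p: "pa m (Pr0 C A A) \<in> hom C (po m (PO C A)) (po m A)"
    by (rule pa_hom[OF pr0_PO_hom[OF A]])
  have "Tseq (Dbar C) (\<lambda>n. (Dseq ^^ n) f) m = pair (Dbar C)
      (compD C (lin_seq C (po m (PO C A)) (pa m (Pr0 C A A))) ((Dseq ^^ m) f)) ((Dseq ^^ Suc m) f)"
    using D.Tseq_eq[OF comult_pre_dseq[OF f], of m] pa_Dbar_lin_seq[OF pr0_PO_hom[OF A], of m]
    by (simp add: PO_def[symmetric] del: funpow.simps)
  also have "\<dots> = (\<lambda>k. pair C (pa k (pa m (Pr0 C A A)) \<cdot> f (k + m)) (f (k + Suc m)))"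
  proof -
    have "pre_dseq C (po m (PO C A)) B (\<lambda>k. pa k (pa m (Pr0 C A A)) \<cdot> f (k + m))"
      using compD_pre_dseq[OF lin_seq_pre_dseq[OF p] Dseq_power_pre_dseq[OF f]]
      by (simp add: compD_lin_seq_left[OF p] Dseq_power)
    moreover have "pre_dseq C (po m (PO C A)) B (\<lambda>k. f (k + Suc m))"
      using Dseq_power_pre_dseq[OF f, of "Suc m"] by (simp add: po_Suc_right Dseq_power del: funpow.simps)
    ultimately show ?thesis
      using pair_Dbar by (simp add: compD_lin_seq_left[OF p] Dseq_power del: funpow.simps)
  qed
  also have "\<dots> = (Dseq ^^ m) (Tseq C f)"
    by (simp add: Dseq_power Tseq_eq[OF f] pa_add del: funpow.simps)
  finally show "Tseq (Dbar C) (\<lambda>n. (Dseq ^^ n) f) m = (Dseq ^^ m) (Tseq C f)" .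
qed

lemma Tn_Dbar_comult:
  assumes f: "pre_dseq C A B f"
  shows "(Tseq (Dbar C) ^^ n) (\<lambda>k. (Dseq ^^ k) f) = (\<lambda>k. (Dseq ^^ k) ((Tseq C ^^ n) f))"
  by (induction n) (simp_all add: T_Dbar_comult[OF Tn_pre_dseq[OF f]])

lemma comult_compD:
  assumes f: "pre_dseq C A B f"
  shows "(\<lambda>n. (Dseq ^^ n) (compD C f g)) = compD (Dbar C) (\<lambda>n. (Dseq ^^ n) f) (\<lambda>n. (Dseq ^^ n) g)"
proof (intro ext)
  fix n k
  have "(Tseq (Dbar C) ^^ n) (\<lambda>n. (Dseq ^^ n) f) 0 = (Tseq C ^^ n) f"
    using fun_cong[OF Tn_Dbar_comult[OF f, of n], of 0] by simp
  then show "(Dseq ^^ n) (compD C f g) k = compD (Dbar C) (\<lambda>n. (Dseq ^^ n) f) (\<lambda>n. (Dseq ^^ n) g) n k"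
    by (simp add: compD_apply Dseq_power funpow_add del: funpow.simps)
qed

lemma idseq_shift:
  assumes A: "A \<in> Obj C"
  shows "idseq C A (k + Suc n) = pa k (Pr1 C (po n A) (po n A)) \<cdot> idseq C A (k + n)"
proof -
  have X: "po n A \<in> Obj C"
    by (rule po_obj[OF A])
  have "idseq C A (k + Suc n) = (idseq C (PO C (po n A)) k \<cdot> Pr1 C (po n A) (po n A)) \<cdot> idseq C A n"
    using idseq_add[OF A, of k "Suc n"]
      comp_assoc[OF idseq_hom[OF PO_obj[OF X]] pr1_PO_hom[OF X] idseq_hom[OF A]] by simp
  also have "\<dots> = pa k (Pr1 C (po n A) (po n A)) \<cdot> (idseq C (po n A) k \<cdot> idseq C A n)"
    by (simp add: comp_assoc[OF pa_hom[OF pr1_PO_hom[OF X]] idseq_hom[OF X] idseq_hom[OF A]]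
        flip: idseq_natural[OF pr1_PO_hom[OF X], of k])
  also have "\<dots> = pa k (Pr1 C (po n A) (po n A)) \<cdot> idseq C A (k + n)"
    using idseq_add[OF A, of k n] by simp
  finally show ?thesis .
qed

lemma comult_idseq:
  assumes A: "A \<in> Obj C"
  shows "(\<lambda>n. (Dseq ^^ n) (idseq C A)) = idseq (Dbar C) A"
proof
  fix n
  show "(Dseq ^^ n) (idseq C A) = idseq (Dbar C) A n"
  proof (induction n)
    case 0
    show ?case
      by simp
  next
    case (Suc n)
    have "idseq (Dbar C) A (Suc n)
        = compD C (lin_seq C (PO C (po n A)) (Pr1 C (po n A) (po n A))) ((Dseq ^^ n) (idseq C A))"
      using Suc by (simp add: PO_def)
    also have "\<dots> = (Dseq ^^ Suc n) (idseq C A)"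
      using compD_lin_seq_left[OF pr1_PO_hom[OF po_obj[OF A]]] idseq_shift[OF A]
      by (simp add: Dseq_power del: funpow.simps)
    finally show ?case
      by simp
  qed
qed

lemma comult_lin_seq:
  assumes x: "x \<in> hom C A B"
  shows "(\<lambda>n. (Dseq ^^ n) (lin_seq C A x)) = lin_seq (Dbar C) A (lin_seq C A x)"
proof
  fix n
  have A: "A \<in> Obj C"
    using hom_objs x by blast
  have "lin_seq (Dbar C) A (lin_seq C A x) n = compD C ((Dseq ^^ n) (idseq C A)) (lin_seq C A x)"
    using fun_cong[OF comult_idseq[OF A], of n] by (simp add: lin_seq_def)
  also have "\<dots> = (Dseq ^^ n) (lin_seq C A x)"
    using compD_lin_seq_right[OF Dseq_power_pre_dseq[OF pre_dseq_idseq[OF A]] x]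
    by (simp add: Dseq_power lin_seq_def)
  finally show "(Dseq ^^ n) (lin_seq C A x) = lin_seq (Dbar C) A (lin_seq C A x) n"
    by simp
qed

lemma counit_cart_functor: "cart_functor (Dbar C) C counit"
  by (rule cart_functorI)
    (auto simp: counit_def hom_Dbar pre_dseq_0 compD_apply lin_seq_0[OF pr0_hom] lin_seq_0[OF pr1_hom]
      cartesian cartesian_Dbar)

lemma comult_cart_functor: "cart_functor (Dbar C) (Dbar (Dbar C)) comult"
  by (rule cart_functorI)
    (auto simp: comult_def hom_Dbar comult_pre_dseq comult_idseq comult_compD
      comult_lin_seq[OF pr0_hom] comult_lin_seq[OF pr1_hom] cartesian_Dbar D.cartesian_Dbar)

end

section \<open>Functoriality of D-bar\<close>

locale cartesian_functor =
  fixes X :: "('o, 'a) cart" and Y :: "('p, 'b) cart" and F :: "('o, 'a, 'p, 'b) cfun"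
  assumes cart_functor: "cart_functor X Y F"
begin

sublocale X: cartesian_category X
  using cart_functor by (simp add: cart_functor_def cartesian_category_def)

sublocale Y: cartesian_category Y
  using cart_functor by (simp add: cart_functor_def cartesian_category_def)

lemma F_obj: "A \<in> Obj X \<Longrightarrow> fst F A \<in> Obj Y"
  using cart_functor by (simp add: cart_functor_def is_functor_def)

lemma F_hom: "f \<in> hom X A B \<Longrightarrow> snd F f \<in> hom Y (fst F A) (fst F B)"
  using cart_functor by (auto simp: cart_functor_def is_functor_def hom_def)

lemma F_comp: "f \<in> hom X A B \<Longrightarrow> g \<in> hom X B D \<Longrightarrow> snd F (Cmp X f g) = Cmp Y (snd F f) (snd F g)"
  using cart_functor by (auto simp: cart_functor_def is_functor_def hom_def)

lemma F_id: "A \<in> Obj X \<Longrightarrow> snd F (Idt X A) = Idt Y (fst F A)"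
  using cart_functor by (simp add: cart_functor_def is_functor_def)

lemma F_trm: "fst F (Trm X) = Trm Y"
  using cart_functor by (simp add: cart_functor_def)

lemma F_prd: "A \<in> Obj X \<Longrightarrow> B \<in> Obj X \<Longrightarrow> fst F (Prd X A B) = Prd Y (fst F A) (fst F B)"
  using cart_functor by (simp add: cart_functor_def)

lemma F_pr0: "A \<in> Obj X \<Longrightarrow> B \<in> Obj X \<Longrightarrow> snd F (Pr0 X A B) = Pr0 Y (fst F A) (fst F B)"
  using cart_functor by (simp add: cart_functor_def)

lemma F_pr1: "A \<in> Obj X \<Longrightarrow> B \<in> Obj X \<Longrightarrow> snd F (Pr1 X A B) = Pr1 Y (fst F A) (fst F B)"
  using cart_functor by (simp add: cart_functor_def)

lemma F_PO: "A \<in> Obj X \<Longrightarrow> fst F (PO X A) = PO Y (fst F A)"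
  by (simp add: PO_def F_prd)

lemma F_po: "A \<in> Obj X \<Longrightarrow> fst F ((PO X ^^ n) A) = (PO Y ^^ n) (fst F A)"
  by (induction n) (auto simp: F_PO X.po_obj)

lemma F_pair:
  assumes f: "f \<in> hom X Z A" and g: "g \<in> hom X Z B"
  shows "snd F (pair X f g) = pair Y (snd F f) (snd F g)"
proof (rule Y.pair_unique[OF F_hom[OF f] F_hom[OF g], symmetric])
  have A: "A \<in> Obj X" and B: "B \<in> Obj X"
    using X.hom_objs f g by auto
  have p: "pair X f g \<in> hom X Z (Prd X A B)"
    by (rule X.pair_hom[OF f g])
  show "snd F (pair X f g) \<in> hom Y (fst F Z) (Prd Y (fst F A) (fst F B))"
    using F_hom[OF p] by (simp add: F_prd[OF A B])
  show "Cmp Y (snd F (pair X f g)) (Pr0 Y (fst F A) (fst F B)) = snd F f"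
    and "Cmp Y (snd F (pair X f g)) (Pr1 Y (fst F A) (fst F B)) = snd F g"
    using F_comp[OF p X.pr0_hom[OF A B]] F_comp[OF p X.pr1_hom[OF A B]]
      X.pair_pr0[OF f g] X.pair_pr1[OF f g] by (simp_all add: F_pr0[OF A B] F_pr1[OF A B])
qed

lemma F_PA:
  assumes f: "f \<in> hom X A B"
  shows "snd F (PA X f) = PA Y (snd F f)"
proof -
  have A: "A \<in> Obj X"
    using X.hom_objs f by auto
  show ?thesis
    unfolding X.PA_eq[OF f] Y.PA_eq[OF F_hom[OF f]]
    by (simp add: F_pair[OF X.comp_hom[OF X.pr0_hom[OF A A] f] X.comp_hom[OF X.pr1_hom[OF A A] f]]
        F_comp[OF X.pr0_hom[OF A A] f] F_comp[OF X.pr1_hom[OF A A] f] F_pr0[OF A A] F_pr1[OF A A])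
qed

lemma F_pa:
  assumes "f \<in> hom X A B"
  shows "snd F ((PA X ^^ n) f) = (PA Y ^^ n) (snd F f)"
  by (induction n) (simp_all add: F_PA[OF X.pa_hom[OF assms]])

lemma F_idseq:
  assumes A: "A \<in> Obj X"
  shows "snd F (idseq X A n) = idseq Y (fst F A) n"
proof (induction n)
  case 0
  show ?case
    by (simp add: F_id[OF A])
next
  case (Suc n)
  have "(PO X ^^ n) A \<in> Obj X"
    by (rule X.po_obj[OF A])
  then show ?case
    using F_comp[OF X.pr1_PO_hom X.idseq_hom[OF A]] Suc
    by (simp add: F_pr1 F_po[OF A] PO_def)
qed

lemma F_pre_dseq: "pre_dseq X A B f \<Longrightarrow> pre_dseq Y (fst F A) (fst F B) (\<lambda>n. snd F (f n))"
  using F_hom[OF X.pre_dseq_hom] X.pre_dseq_0 by (simp add: pre_dseq_def F_po)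

lemma F_Tseq:
  assumes f: "pre_dseq X A B f"
  shows "(\<lambda>n. snd F (Tseq X f n)) = Tseq Y (\<lambda>n. snd F (f n))"
proof
  fix n
  have A: "A \<in> Obj X"
    using X.pre_dseq_0[OF f] by simp
  have p: "(PA X ^^ n) (Pr0 X A A) \<in> hom X ((PO X ^^ n) (PO X A)) ((PO X ^^ n) A)"
    by (rule X.pa_hom[OF X.pr0_PO_hom[OF A]])
  have "Cmp X ((PA X ^^ n) (Pr0 X A A)) (f n) \<in> hom X ((PO X ^^ n) (PO X A)) B"
    and "f (Suc n) \<in> hom X ((PO X ^^ n) (PO X A)) B"
    using X.comp_hom[OF p X.pre_dseq_hom[OF f]] X.pre_dseq_hom[OF f, of "Suc n"]
    by (simp_all add: X.po_Suc_right del: funpow.simps)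
  then show "snd F (Tseq X f n) = Tseq Y (\<lambda>n. snd F (f n)) n"
    unfolding X.Tseq_eq[OF f] Y.Tseq_eq[OF F_pre_dseq[OF f]]
    by (simp add: F_pair F_comp[OF p X.pre_dseq_hom[OF f]] F_pa[OF X.pr0_PO_hom[OF A]]
        F_pr0[OF A A] del: funpow.simps)
qed

lemma F_Tn:
  assumes f: "pre_dseq X A B f"
  shows "(\<lambda>k. snd F ((Tseq X ^^ n) f k)) = (Tseq Y ^^ n) (\<lambda>k. snd F (f k))"
proof (induction n)
  case (Suc n)
  then show ?case
    using F_Tseq[OF X.Tn_pre_dseq[OF f, of n]] by simp
qed simp

lemma F_compD:
  assumes f: "pre_dseq X A B f" and g: "pre_dseq X B D g"
  shows "(\<lambda>n. snd F (compD X f g n)) = compD Y (\<lambda>n. snd F (f n)) (\<lambda>n. snd F (g n))"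
proof
  fix n
  show "snd F (compD X f g n) = compD Y (\<lambda>n. snd F (f n)) (\<lambda>n. snd F (g n)) n"
    using F_comp[OF X.Tn_0_hom[OF f, of n] X.pre_dseq_hom[OF g, of n]]
      fun_cong[OF F_Tn[OF f, of n], of 0]
    by (simp add: compD_apply del: funpow.simps)
qed

lemma F_lin_seq:
  assumes x: "x \<in> hom X A B"
  shows "(\<lambda>n. snd F (lin_seq X A x n)) = lin_seq Y (fst F A) (snd F x)"
  using F_comp[OF X.idseq_hom x] F_idseq X.hom_objs[OF x] by (simp add: lin_seq_def)

lemma Dbar_map_cart_functor: "cart_functor (Dbar X) (Dbar Y) (Dbar_map F)"
  by (rule cart_functorI)
    (auto simp: Dbar_map_def hom_Dbar F_trm F_obj F_pre_dseq F_idseq F_compD F_prd F_pr0 F_pr1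
      F_lin_seq[OF X.pr0_hom] F_lin_seq[OF X.pr1_hom] X.cartesian_Dbar Y.cartesian_Dbar)

end

lemma Dbar_map_fid: "feq (Dbar X) (Dbar_map fid) fid"
  by (simp add: feq_def Dbar_map_def fid_def)

lemma Dbar_map_fcmp: "feq (Dbar X) (Dbar_map (fcmp F G)) (fcmp (Dbar_map F) (Dbar_map G))"
  by (simp add: feq_def Dbar_map_def fcmp_def)

section \<open>Naturality and comonad laws\<close>

lemma counit_natural: "feq (Dbar X) (fcmp (Dbar_map F) counit) (fcmp counit F)"
  by (simp add: feq_def Dbar_map_def fcmp_def counit_def)

lemma comult_natural: "feq (Dbar X) (fcmp (Dbar_map F) comult) (fcmp comult (Dbar_map (Dbar_map F)))"
  by (simp add: feq_def Dbar_map_def fcmp_def comult_def Dseq_power)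

lemma comult_counit: "feq (Dbar X) (fcmp comult counit) fid"
  by (simp add: feq_def fcmp_def comult_def counit_def fid_def)

lemma comult_Dbar_map_counit: "feq (Dbar X) (fcmp comult (Dbar_map counit)) fid"
  by (simp add: feq_def fcmp_def comult_def counit_def fid_def Dbar_map_def Dseq_power)

lemma comult_coassoc: "feq (Dbar X) (fcmp comult comult) (fcmp comult (Dbar_map comult))"
  by (simp add: feq_def fcmp_def comult_def Dbar_map_def Dseq_power add.assoc)

theorem proposition3p19:
  fixes X :: "('o, 'a) cart" and Y :: "('p, 'b) cart" and Z :: "('q, 'c) cart"
    and F :: "('o, 'a, 'p, 'b) cfun" and G :: "('p, 'b, 'q, 'c) cfun"
  shows
    \<comment> \<open>D-bar is an endofunctor of CART\<close>
    "(cartesian X \<longrightarrow> cartesian (Dbar X)) \<and>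
     (cart_functor X Y F \<longrightarrow> cart_functor (Dbar X) (Dbar Y) (Dbar_map F)) \<and>
     (cartesian X \<longrightarrow> feq (Dbar X) (Dbar_map (fid :: ('o, 'a, 'o, 'a) cfun)) fid) \<and>
     (cart_functor X Y F \<and> cart_functor Y Z G \<longrightarrow>
        feq (Dbar X) (Dbar_map (fcmp F G)) (fcmp (Dbar_map F) (Dbar_map G))) \<and>
     \<comment> \<open>counit: CART morphisms, natural\<close>
     (cartesian X \<longrightarrow> cart_functor (Dbar X) X counit) \<and>
     (cart_functor X Y F \<longrightarrow> feq (Dbar X) (fcmp (Dbar_map F) counit) (fcmp counit F)) \<and>
     \<comment> \<open>comultiplication: CART morphisms, natural\<close>
     (cartesian X \<longrightarrow> cart_functor (Dbar X) (Dbar (Dbar X)) comult) \<and>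
     (cart_functor X Y F \<longrightarrow>
        feq (Dbar X) (fcmp (Dbar_map F) comult) (fcmp comult (Dbar_map (Dbar_map F)))) \<and>
     \<comment> \<open>comonad laws\<close>
     (cartesian X \<longrightarrow>
        feq (Dbar X) (fcmp comult (counit :: ('o, nat \<Rightarrow> nat \<Rightarrow> 'a, 'o, nat \<Rightarrow> 'a) cfun)) fid \<and>
        feq (Dbar X) (fcmp comult (Dbar_map (counit :: ('o, nat \<Rightarrow> 'a, 'o, 'a) cfun))) fid \<and>
        feq (Dbar X) (fcmp comult (comult :: ('o, nat \<Rightarrow> nat \<Rightarrow> 'a, 'o, nat \<Rightarrow> nat \<Rightarrow> nat \<Rightarrow> 'a) cfun))
                     (fcmp comult (Dbar_map (comult :: ('o, nat \<Rightarrow> 'a, 'o, nat \<Rightarrow> nat \<Rightarrow> 'a) cfun))))"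
  by (simp add: cartesian_category.cartesian_Dbar cartesian_category.counit_cart_functor
      cartesian_category.comult_cart_functor cartesian_functor.Dbar_map_cart_functor
      cartesian_category_def cartesian_functor_def Dbar_map_fid Dbar_map_fcmp counit_natural
      comult_natural comult_counit comult_Dbar_map_counit comult_coassoc)

end
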